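(* Let $\mathbf{P}$ be a poset and let $\phi\in\mathcal{FO}(\forall,\exists,\wedge)$ be a sentence in reduced form. If there exists $p\in P$ such that $m\le^{\mathbf{P}}p\le^{\mathbf{P}}M$ for every minimal element $m$ of $\mathbf{P}$ and every maximal element $M$ of $\mathbf{P}$, then $\mathbf{P}\models\phi$.
   Context: $\mathcal{FO}(\forall,\exists,\wedge)$ denotes the class of first-order sentences over the vocabulary $\{\le\}$ built from atoms using only $\forall,\exists,\wedge$. All posets are finite with at least two elements. A sentence in alternating prefix form is $\phi=\forall x_1\exists y_1\ldots\forall x_l\exists y_l\,C$ with $l\ge0$, distinct variables, and $C$ a conjunction of atoms $u\le v$ over $\{x_1,y_1,\ldots,x_l,y_l\}$. It is represented by the prefix chain $\mathbf{Q}_\phi$ on $\{x_1,y_1,\ldots,x_l,y_l\}$ ordered $x_1<y_1<\cdots<x_l<y_l$ and the digraph $\mathbf{M}_\phi$ on the same set with an edge $(u,v)$ iff $u\le v$ is an atom of $C$. Let $M^\forall_\phi=\{x_1,\ldots,x_l\}$ and $M^\exists_\phi=\{y_1,\ldots,y_l\}$. $\phi$ is in reduced form if: (i) $\mathbf{M}_\phi$ is a poset; (ii) the elements of $M^\forall_\phi$ are pairwise incomparable in $\mathbf{M}_\phi$; (iii) for distinct $x,x'\in M^\forall_\phi$, their upsets in $\mathbf{M}_\phi$ are disjoint and their downsets in $\mathbf{M}_\phi$ are disjoint; (iv) for every $x\in M^\forall_\phi$ and every $y\in M^\exists_\phi$ comparable to $x$ in $\mathbf{M}_\phi$, $x$ precedes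 $y$ in $\mathbf{Q}_\phi$. *)

theory Defs
  imports Main
begin

text \<open>Variables of a sentence in alternating prefix form
  forall x_1 exists y_1 ... forall x_l exists y_l C : X i is x_i, Y i is y_i (1 <= i <= l).
  Distinctness of the variables is built into this encoding.\<close>
datatype var = X nat | Y nat

text \<open>A sentence is given by its length l and the set C of atoms (u,v), each meaning u <= v.\<close>
definition vars :: "nat \<Rightarrow> var set" where
  "vars l = {X i | i. 1 \<le> i \<and> i \<le> l} \<union> {Y i | i. 1 \<le> i \<and> i \<le> l}"

definition wf_sentence :: "nat \<Rightarrow> (var \<times> var) set \<Rightarrow> bool" where
  "wf_sentence l C \<longleftrightarrow> C \<subseteq> vars l \<times> vars l"

fun pos :: "var \<Rightarrow> nat" where
  "pos (X i) = 2 * i"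
| "pos (Y i) = 2 * i + 1"

definition reduced_form :: "nat \<Rightarrow> (var \<times> var) set \<Rightarrow> bool" where
  "reduced_form l C \<longleftrightarrow>
     partial_order_on (vars l) C \<and>
     (\<forall>i j. 1 \<le> i \<and> i \<le> l \<and> 1 \<le> j \<and> j \<le> l \<and> i \<noteq> j \<longrightarrow>
        (X i, X j) \<notin> C) \<and>
     (\<forall>i j. 1 \<le> i \<and> i \<le> l \<and> 1 \<le> j \<and> j \<le> l \<and> i \<noteq> j \<longrightarrow>
        (\<nexists>v. (X i, v) \<in> C \<and> (X j, v) \<in> C) \<and> (\<nexists>v. (v, X i) \<in> C \<and> (v, X j) \<in> C)) \<and>
     (\<forall>i j. 1 \<le> i \<and> i \<le> l \<and> 1 \<le> j \<and> j \<le> l \<and>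
        ((X i, Y j) \<in> C \<or> (Y j, X i) \<in> C) \<longrightarrow> pos (X i) < pos (Y j))"

text \<open>Satisfaction in a poset (the type 'a with its order). models_aux C l n s:
  n quantifier pairs remain, the next one is for index l - n + 1.\<close>
definition holds :: "(var \<times> var) set \<Rightarrow> (var \<Rightarrow> 'a::order) \<Rightarrow> bool" where
  "holds C s \<longleftrightarrow> (\<forall>(u, v) \<in> C. s u \<le> s v)"

fun models_aux :: "(var \<times> var) set \<Rightarrow> nat \<Rightarrow> nat \<Rightarrow> (var \<Rightarrow> 'a::order) \<Rightarrow> bool" where
  "models_aux C l 0 s = holds C s"
| "models_aux C l (Suc n) s =
     (\<forall>a. \<exists>b. models_aux C l n (s(X (l - n) := a, Y (l - n) := b)))"

definition models :: "'a::order itself \<Rightarrow> nat \<Rightarrow> (var \<times> var) set \<Rightarrow> bool" where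
  "models _ l C \<longleftrightarrow> models_aux C l l (\<lambda>_. undefined :: 'a)"

definition minimal :: "'a::order \<Rightarrow> bool" where
  "minimal m \<longleftrightarrow> (\<forall>x. x \<le> m \<longrightarrow> x = m)"

definition maximal :: "'a::order \<Rightarrow> bool" where
  "maximal M \<longleftrightarrow> (\<forall>x. M \<le> x \<longrightarrow> x = M)"

end

theory Submission
  imports Defs
begin

text \<open>
  Read a sentence in reduced form as a game: the universal player
  picks values for x_1, y_1, ... in turn order, and the existential player answers
  each y_j.  Because the upsets (downsets) of distinct universal variables are
  disjoint, every y_j lies above at most one x_i, below at most one x_i, never
  both, and that x_i is quantified before y_j.  The existential player answers
  y_j by a maximal element above the value of x_i if x_i <= y_j is forced, by a
  minimal element below it if y_j <= x_i is forced, and by the central element p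
  otherwise.  Since p lies between every minimal and every maximal element, all
  atoms of C are satisfied.
\<close>

lemma ex_maximal_above: "\<exists>M::'a::{order,finite}. a \<le> M \<and> maximal M"
  using finite_has_maximal2[of "UNIV::'a set" a] unfolding maximal_def by auto

lemma ex_minimal_below: "\<exists>m::'a::{order,finite}. m \<le> a \<and> minimal m"
  using finite_has_minimal2[of "UNIV::'a set" a] unfolding minimal_def by auto

lemma models_aux_from_strategy:
  fixes G :: "(var \<Rightarrow> 'a::order) \<Rightarrow> nat \<Rightarrow> 'a"
  assumes causal: "\<And>s t j. 1 \<le> j \<Longrightarrow> j \<le> l \<Longrightarrow> (\<forall>i\<le>j. s (X i) = t (X i)) \<Longrightarrow> G s j = G t j"
    and wins: "\<And>s. \<forall>j. 1 \<le> j \<and> j \<le> l \<longrightarrow> s (Y j) = G s j \<Longrightarrow> holds C s"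
  shows "n \<le> l \<Longrightarrow> \<forall>j. 1 \<le> j \<and> j \<le> l - n \<longrightarrow> s (Y j) = G s j \<Longrightarrow> models_aux C l n s"
proof (induction n arbitrary: s)
  case 0
  then show ?case using wins by simp
next
  case (Suc n)
  show ?case unfolding models_aux.simps
  proof
    fix a
    define k where "k = l - n"
    have k: "1 \<le> k" "k \<le> l" using Suc.prems(1) k_def by auto
    define s' where "s' = s(X k := a, Y k := G (s(X k := a)) k)"
    have "s' (Y j) = G s' j" if j: "1 \<le> j" "j \<le> k" for j
    proof (cases "j = k")
      case True
      have "G s' k = G (s(X k := a)) k" using causal[of k s' "s(X k := a)"] k by (simp add: s'_def)
      then show ?thesis using True by (simp add: s'_def)
    next
      case False
      have "G s' j = G s j" using causal[of j s' s] False j k by (simp add: s'_def)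
      moreover have "s (Y j) = G s j" using Suc.prems False j k_def by auto
      ultimately show ?thesis using False by (simp add: s'_def)
    qed
    then have "models_aux C l n s'" using Suc.IH Suc.prems(1) k_def by simp
    then show "\<exists>b. models_aux C l n (s(X (l - n) := a, Y (l - n) := b))"
      unfolding s'_def k_def by blast
  qed
qed

lemma models_from_strategy:
  fixes G :: "(var \<Rightarrow> 'a::order) \<Rightarrow> nat \<Rightarrow> 'a"
  assumes "\<And>s t j. 1 \<le> j \<Longrightarrow> j \<le> l \<Longrightarrow> (\<forall>i\<le>j. s (X i) = t (X i)) \<Longrightarrow> G s j = G t j"
    and "\<And>s. \<forall>j. 1 \<le> j \<and> j \<le> l \<longrightarrow> s (Y j) = G s j \<Longrightarrow> holds C s"
  shows "models TYPE('a) l C"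
  unfolding models_def using models_aux_from_strategy[OF assms, of l] by simp

locale reduced_sentence =
  fixes l :: nat and C :: "(var \<times> var) set"
  assumes wf: "wf_sentence l C"
    and reduced: "reduced_form l C"
begin

lemma atom_vars: "(u, v) \<in> C \<Longrightarrow> u \<in> vars l \<and> v \<in> vars l"
  using wf unfolding wf_sentence_def by auto

lemma X_in_vars: "X i \<in> vars l \<longleftrightarrow> 1 \<le> i \<and> i \<le> l"
  and Y_in_vars: "Y j \<in> vars l \<longleftrightarrow> 1 \<le> j \<and> j \<le> l"
  unfolding vars_def by auto

lemma trans_C: "(u, v) \<in> C \<Longrightarrow> (v, w) \<in> C \<Longrightarrow> (u, w) \<in> C"
  using reduced unfolding reduced_form_def partial_order_on_def preorder_on_def
  by (meson transD)

lemma antisym_C: "(u, v) \<in> C \<Longrightarrow> (v, u) \<in> C \<Longrightarrow> u = v"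
  using reduced unfolding reduced_form_def partial_order_on_def by (meson antisymD)

lemma X_incomparable: "(X i, X j) \<in> C \<Longrightarrow> i = j"
  using reduced atom_vars[of "X i" "X j"] unfolding reduced_form_def X_in_vars by blast

lemma upset_owner_unique: "(X i, v) \<in> C \<Longrightarrow> (X j, v) \<in> C \<Longrightarrow> i = j"
  using reduced atom_vars[of "X i" v] atom_vars[of "X j" v]
  unfolding reduced_form_def X_in_vars by blast

lemma downset_owner_unique: "(v, X i) \<in> C \<Longrightarrow> (v, X j) \<in> C \<Longrightarrow> i = j"
  using reduced atom_vars[of v "X i"] atom_vars[of v "X j"]
  unfolding reduced_form_def X_in_vars by blast

lemma X_precedes_Y: "(X i, Y j) \<in> C \<or> (Y j, X i) \<in> C \<Longrightarrow> i \<le> j"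
proof -
  assume h: "(X i, Y j) \<in> C \<or> (Y j, X i) \<in> C"
  then have "1 \<le> i \<and> i \<le> l \<and> 1 \<le> j \<and> j \<le> l"
    using atom_vars X_in_vars Y_in_vars by blast
  then have "pos (X i) < pos (Y j)" using h reduced unfolding reduced_form_def by blast
  then show "i \<le> j" by simp
qed

lemma not_above_and_below: "(X i, Y j) \<in> C \<Longrightarrow> (Y j, X i') \<in> C \<Longrightarrow> False"
proof -
  assume up: "(X i, Y j) \<in> C" and down: "(Y j, X i') \<in> C"
  then have "i = i'" using trans_C X_incomparable by blast
  then show False using antisym_C up down by blast
qed

end

text \<open>hi and lo push a value up and down, and p separates every lo-value from
  every hi-value; in the application hi/lo pick maximal/minimal elements.\<close>
locale answer_strategy = reduced_sentence l C for l C +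
  fixes p :: "'a::order" and lo hi :: "'a \<Rightarrow> 'a"
  assumes lo_le: "lo x \<le> x" and le_hi: "x \<le> hi x"
    and lo_le_p: "lo x \<le> p" and p_le_hi: "p \<le> hi x"
begin

definition answer :: "(var \<Rightarrow> 'a) \<Rightarrow> nat \<Rightarrow> 'a" where
  "answer s j =
     (if \<exists>i. (X i, Y j) \<in> C then hi (s (X (THE i. (X i, Y j) \<in> C)))
      else if \<exists>i. (Y j, X i) \<in> C then lo (s (X (THE i. (Y j, X i) \<in> C)))
      else p)"

lemma answer_above: "(X i, Y j) \<in> C \<Longrightarrow> answer s j = hi (s (X i))"
proof -
  assume h: "(X i, Y j) \<in> C"
  then have "(THE i. (X i, Y j) \<in> C) = i" using upset_owner_unique by blast
  then show ?thesis using h unfolding answer_def by auto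
qed

lemma answer_below: "(Y j, X i) \<in> C \<Longrightarrow> answer s j = lo (s (X i))"
proof -
  assume h: "(Y j, X i) \<in> C"
  then have "(THE i. (Y j, X i) \<in> C) = i" using downset_owner_unique by blast
  moreover have "\<nexists>i'. (X i', Y j) \<in> C" using h not_above_and_below by blast
  ultimately show ?thesis using h unfolding answer_def by auto
qed

lemma answer_free:
  "\<nexists>i. (X i, Y j) \<in> C \<Longrightarrow> \<nexists>i. (Y j, X i) \<in> C \<Longrightarrow> answer s j = p"
  unfolding answer_def by auto

lemma answer_causal:
  assumes "\<forall>i\<le>j. s (X i) = t (X i)"
  shows "answer s j = answer t j"
proof -
  consider (above) i where "(X i, Y j) \<in> C" | (below) i where "(Y j, X i) \<in> C"
    | (free) "\<nexists>i. (X i, Y j) \<in> C" "\<nexists>i. (Y j, X i) \<in> C" by blast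
  then show ?thesis
  proof cases
    case above
    then show ?thesis using answer_above X_precedes_Y assms by metis
  next
    case below
    then show ?thesis using answer_below X_precedes_Y assms by metis
  qed (simp add: answer_free)
qed

lemma lo_le_hi: "lo x \<le> hi y"
  using lo_le_p p_le_hi order_trans by blast

lemma answer_mono:
  assumes ab: "(Y a, Y b) \<in> C"
  shows "answer s a \<le> answer s b"
proof -
  consider (above) i where "(X i, Y a) \<in> C" | (below) i where "(Y a, X i) \<in> C"
    | (free) "\<nexists>i. (X i, Y a) \<in> C" "\<nexists>i. (Y a, X i) \<in> C" by blast
  then show ?thesis
  proof cases
    case above
    then have "(X i, Y b) \<in> C" using ab trans_C by blast
    then show ?thesis using above answer_above by simp
  next
    case below
    have "lo (s (X i)) \<le> answer s b"
    proof (cases "\<exists>i'. (Y b, X i') \<in> C")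
      case True
      then obtain i' where "(Y b, X i') \<in> C" by blast
      moreover have "i' = i"
        using calculation below ab trans_C downset_owner_unique by blast
      ultimately show ?thesis using answer_below by simp
    next
      case False
      then show ?thesis using answer_above answer_free lo_le_hi lo_le_p by metis
    qed
    then show ?thesis using below answer_below by simp
  next
    case free
    have "\<nexists>i. (Y b, X i) \<in> C" using free ab trans_C by blast
    then have "p \<le> answer s b" using answer_above answer_free p_le_hi by (metis order_refl)
    then show ?thesis using free answer_free by simp
  qed
qed

lemma answer_wins:
  assumes follows: "\<forall>j. 1 \<le> j \<and> j \<le> l \<longrightarrow> s (Y j) = answer s j"
  shows "holds C s"
  unfolding holds_def
proof clarify
  fix u v assume uv: "(u, v) \<in> C"
  have played: "s (Y j) = answer s j" if "Y j \<in> vars l" for j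
    using follows that Y_in_vars by blast
  show "s u \<le> s v"
  proof (cases u; cases v)
    fix i i' assume "u = X i" "v = X i'"
    then show ?thesis using uv X_incomparable by blast
  next
    fix i j assume "u = X i" "v = Y j"
    then show ?thesis using uv atom_vars played answer_above le_hi by metis
  next
    fix j i assume "u = Y j" "v = X i"
    then show ?thesis using uv atom_vars played answer_below lo_le by metis
  next
    fix a b assume "u = Y a" "v = Y b"
    then show ?thesis using uv atom_vars played answer_mono by metis
  qed
qed

lemma answer_strategy_models: "models TYPE('a) l C"
  using models_from_strategy[of l answer C] answer_causal answer_wins by blast

end

theorem proposition2:
  fixes l :: nat and C :: "(var \<times> var) set"
  assumes "wf_sentence l C"
    and "reduced_form l C"
    and "card (UNIV :: 'a set) \<ge> 2"
    and "\<exists>p::'a::{order,finite}. \<forall>m M. minimal m \<and> maximal M \<longrightarrow> m \<le> p \<and> p \<le> M"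
  shows "models TYPE('a) l C"
proof -
  obtain p :: 'a where central: "\<And>m M. minimal m \<Longrightarrow> maximal M \<Longrightarrow> m \<le> p \<and> p \<le> M"
    using assms(4) by blast
  obtain hi :: "'a \<Rightarrow> 'a" where hi: "\<And>a. a \<le> hi a \<and> maximal (hi a)"
    using ex_maximal_above by metis
  obtain lo :: "'a \<Rightarrow> 'a" where lo: "\<And>a. lo a \<le> a \<and> minimal (lo a)"
    using ex_minimal_below by metis
  interpret answer_strategy l C p lo hi
  proof
    show "wf_sentence l C" "reduced_form l C" using assms(1,2) .
  qed (use hi lo central in blast)+
  show ?thesis by (rule answer_strategy_models)
qed

end
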